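(* Let $f\in\mathcal{A}$ satisfy $L(f)/l(f)<+\infty$. Then $$\|f\|\le\frac{2}{\pi}\bigl(1+L(f)\bigr)\log\frac{L(f)}{l(f)}.$$
   Context: $\mathbb{D}=\{z\in\mathbb{C}:|z|<1\}$; $\mathcal{A}$ is the class of analytic $f$ on $\mathbb{D}$ with $f(0)=0$, $f'(0)=1$; $zf'(z)/f(z)$ at $z=0$ is understood as $1$. $L(f)=\sup_{z\in\mathbb{D}}|zf'(z)/f(z)|$, $l(f)=\inf_{z\in\mathbb{D}}|zf'(z)/f(z)|$. The pre-Schwarzian norm is $\|f\|=\sup_{z\in\mathbb{D}}(1-|z|^2)|f''(z)/f'(z)|$. *)

theory Defs
  imports "HOL-Complex_Analysis.Complex_Analysis" "HOL-Library.Extended_Real"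
begin

definition classA :: "(complex \<Rightarrow> complex) \<Rightarrow> bool" where
  "classA f \<longleftrightarrow> f holomorphic_on ball 0 1 \<and> f 0 = 0 \<and> deriv f 0 = 1"

text \<open>|z f'(z)/f(z)| as an extended real: value 1 at z = 0; at a zero z \<noteq> 0 of f
  the function z f'/f has a pole, so the value is taken to be \<infinity>.\<close>
definition absQ :: "(complex \<Rightarrow> complex) \<Rightarrow> complex \<Rightarrow> ereal" where
  "absQ f z = (if z = 0 then 1 else if f z = 0 then \<infinity>
               else ereal (cmod (z * deriv f z / f z)))"

definition Lsup :: "(complex \<Rightarrow> complex) \<Rightarrow> ereal" where
  "Lsup f = (SUP z\<in>ball 0 1. absQ f z)"

definition linf :: "(complex \<Rightarrow> complex) \<Rightarrow> ereal" where
  "linf f = (INF z\<in>ball 0 1. absQ f z)"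

text \<open>Pre-Schwarzian norm sup (1-|z|^2)|f''/f'|; at zeros of f' (poles of f''/f')
  the value is \<infinity>.\<close>
definition preSchwarzian_norm :: "(complex \<Rightarrow> complex) \<Rightarrow> ereal" where
  "preSchwarzian_norm f = (SUP z\<in>ball 0 1.
      (if deriv f z = 0 then \<infinity>
       else ereal ((1 - (cmod z)\<^sup>2) * cmod (deriv (deriv f) z / deriv f z))))"

end

theory Submission
  imports Defs
begin

text \<open>
  Write \<open>G(z) = z f'(z)/f(z)\<close>, so that \<open>G(0) = 1\<close> and \<open>l \<le> |G| \<le> L\<close>. A holomorphic
  logarithm of \<open>G\<close> maps the disc into the strip \<open>log l \<le> Re w \<le> log L\<close>, and the
  Schwarz--Pick lemma for the strip gives \<open>(1 - |z|\<^sup>2) |G'/G| \<le> C\<close> with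
  \<open>C = (2/\<pi>) log (L/l)\<close>. Integrating \<open>|G'| \<le> L C / (1 - |z|\<^sup>2)\<close> along the radius gives
  \<open>(1 - |z|\<^sup>2) |G(z) - 1| \<le> L C |z|\<close>, and the identity
  \<open>f''/f' = G'/G + (G - 1)/z\<close> combines both into \<open>(1 - |z|\<^sup>2) |f''/f'| \<le> (1 + L) C\<close>.
\<close>

lemma cayley_right_half_plane_norm_less_1:
  fixes u q :: complex
  assumes "Re u > 0" "Re q > 0"
  shows "cmod ((u - q) / (u + cnj q)) < 1"
proof -
  have "Re (u + cnj q) > 0" using assms by simp
  hence pos: "cmod (u + cnj q) > 0" using complex_Re_le_cmod[of "u + cnj q"] by linarith
  have "(cmod (u - q))\<^sup>2 < (cmod (u + cnj q))\<^sup>2"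
    using assms mult_pos_pos[OF assms] unfolding cmod_power2
    by (simp add: power2_eq_square algebra_simps)
  hence "cmod (u - q) < cmod (u + cnj q)"
    by (meson norm_ge_zero power_less_imp_less_base)
  thus ?thesis using pos by (simp add: norm_divide divide_less_eq)
qed

lemma strip_deriv_bound_at_0:
  fixes k :: "complex \<Rightarrow> complex"
  assumes hol: "k holomorphic_on ball 0 1"
    and strip: "\<And>z. z \<in> ball 0 1 \<Longrightarrow> a < Re (k z) \<and> Re (k z) < b"
  shows "cmod (deriv k 0) \<le> 2 * (b - a) / pi"
proof -
  define W where "W = b - a"
  have W: "W > 0" using strip[of 0] by (simp add: W_def)
  define c where "c = \<i> * complex_of_real (pi / W)"
  \<comment> \<open>\<open>E\<close> maps the strip onto the right half-plane, \<open>F\<close> below maps that onto the disc with \<open>F 0 = 0\<close>.\<close>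
  define E where "E = (\<lambda>w. exp (c * (w - complex_of_real ((a + b) / 2))))"
  have Re_E: "Re (E w) > 0" if "a < Re w" "Re w < b" for w
  proof -
    have "Im (c * (w - complex_of_real ((a + b) / 2))) = pi / W * (Re w - (a + b) / 2)"
      by (simp add: c_def)
    moreover have "-(pi / 2) < pi / W * (Re w - (a + b) / 2)" "pi / W * (Re w - (a + b) / 2) < pi / 2"
      using that W by (auto simp: W_def field_simps)
    ultimately show ?thesis by (simp add: E_def Re_exp cos_gt_zero_pi)
  qed
  define q where "q = E (k 0)"
  have q: "Re q > 0" using Re_E strip[of 0] by (simp add: q_def)
  define F where "F = (\<lambda>z. (E (k z) - q) / (E (k z) + cnj q))"
  have den: "E (k z) + cnj q \<noteq> 0" if "z \<in> ball 0 1" for z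
  proof -
    have "Re (E (k z) + cnj q) > 0" using Re_E[of "k z"] strip[OF that] q by simp
    thus ?thesis by (metis less_irrefl zero_complex.simps(1))
  qed
  have hol_F: "F holomorphic_on ball 0 1"
    using den unfolding F_def E_def by (intro holomorphic_intros hol) auto
  have F_lt_1: "norm (F z) < 1" if "norm z < 1" for z
    using that unfolding F_def by (simp add: cayley_right_half_plane_norm_less_1 Re_E q strip)
  have dF_le_1: "norm (deriv F 0) \<le> 1"
    using Schwarz_Lemma(2)[OF hol_F _ F_lt_1, of 0] by (simp add: F_def q_def)
  have dk: "(k has_field_derivative deriv k 0) (at 0)"
    using holomorphic_derivI[OF hol] by simp
  have dEk: "((\<lambda>z. E (k z)) has_field_derivative q * (c * deriv k 0)) (at 0)"
    unfolding E_def q_def by (rule derivative_eq_intros dk refl | simp)+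
  have "q + cnj q \<noteq> 0" using den[of 0] by (simp add: q_def)
  hence "(F has_field_derivative (q * (c * deriv k 0)) / (q + cnj q)) (at 0)"
    using DERIV_divide[OF DERIV_diff[OF dEk DERIV_const[of q]] DERIV_add[OF dEk DERIV_const[of "cnj q"]]]
    unfolding F_def q_def by simp
  hence "deriv F 0 = (q * (c * deriv k 0)) / (q + cnj q)" by (rule DERIV_imp_deriv)
  also have "q + cnj q = 2 * Re q" by (simp add: complex_add_cnj)
  finally have "cmod q * (pi / W * cmod (deriv k 0)) \<le> 2 * Re q"
    using dF_le_1 q W by (simp add: norm_divide norm_mult c_def divide_le_eq mult_ac)
  also have "\<dots> \<le> cmod q * 2" by (simp add: complex_Re_le_cmod)
  finally have "pi / W * cmod (deriv k 0) \<le> 2"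
    using q complex_Re_le_cmod[of q] by (subst (asm) mult_le_cancel_left_pos) auto
  thus ?thesis using W by (simp add: W_def field_simps)
qed

lemma strip_deriv_bound:
  fixes h :: "complex \<Rightarrow> complex"
  assumes hol: "h holomorphic_on ball 0 1"
    and strip: "\<And>w. w \<in> ball 0 1 \<Longrightarrow> a < Re (h w) \<and> Re (h w) < b"
    and z: "z \<in> ball 0 1"
  shows "(1 - (cmod z)\<^sup>2) * cmod (deriv h z) \<le> 2 * (b - a) / pi"
proof -
  define M where "M = Moebius_function 0 (-z)"
  have nz: "norm (-z) < 1" using z by simp
  have M_ball: "M w \<in> ball 0 1" if "w \<in> ball 0 1" for w
    using Moebius_function_norm_lt_1[OF nz, of w 0] that by (simp add: M_def)
  have hol_hM: "(h \<circ> M) holomorphic_on ball 0 1"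
    using M_ball unfolding M_def
    by (intro holomorphic_on_compose_gen[OF Moebius_function_holomorphic[OF nz] hol]) auto
  have M_eq: "M = (\<lambda>w. (w + z) / (1 + cnj z * w))"
    by (auto simp: M_def Moebius_function_simple fun_eq_iff)
  have dM: "(M has_field_derivative (1 - cnj z * z)) (at 0)"
    unfolding M_eq by (rule derivative_eq_intros refl | simp)+
  have dh: "(h has_field_derivative deriv h z) (at (M 0))"
    using holomorphic_derivI[OF hol open_ball z] by (simp add: M_eq)
  have "deriv (h \<circ> M) 0 = deriv h z * (1 - cnj z * z)"
    by (rule DERIV_imp_deriv[OF DERIV_chain[OF dh dM]])
  moreover have "cmod (1 - cnj z * z) = 1 - (cmod z)\<^sup>2"
  proof -
    have "cnj z * z = complex_of_real ((cmod z)\<^sup>2)"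
      by (metis complex_norm_square mult.commute)
    hence "1 - cnj z * z = complex_of_real (1 - (cmod z)\<^sup>2)" by simp
    moreover have "0 \<le> 1 - (cmod z)\<^sup>2" using z by (simp add: power_le_one)
    ultimately show ?thesis by (metis norm_of_real abs_of_nonneg)
  qed
  ultimately have "cmod (deriv (h \<circ> M) 0) = (1 - (cmod z)\<^sup>2) * cmod (deriv h z)"
    by (simp add: norm_mult)
  thus ?thesis using strip_deriv_bound_at_0[OF hol_hM] strip M_ball by simp
qed

lemma closed_strip_deriv_bound:
  fixes h :: "complex \<Rightarrow> complex"
  assumes hol: "h holomorphic_on ball 0 1"
    and strip: "\<And>w. w \<in> ball 0 1 \<Longrightarrow> a \<le> Re (h w) \<and> Re (h w) \<le> b"
    and z: "z \<in> ball 0 1"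
  shows "(1 - (cmod z)\<^sup>2) * cmod (deriv h z) \<le> 2 * (b - a) / pi"
proof (rule field_le_epsilon)
  fix e :: real
  assume e: "e > 0"
  have "(1 - (cmod z)\<^sup>2) * cmod (deriv h z) \<le> 2 * ((b + e * pi / 4) - (a - e * pi / 4)) / pi"
  proof (rule strip_deriv_bound[OF hol _ z])
    have "e * pi / 4 > 0" using e by simp
    thus "a - e * pi / 4 < Re (h w) \<and> Re (h w) < b + e * pi / 4" if "w \<in> ball 0 1" for w
      using strip[OF that] by linarith
  qed
  also have "\<dots> = 2 * (b - a) / pi + e" by (simp add: field_simps)
  finally show "(1 - (cmod z)\<^sup>2) * cmod (deriv h z) \<le> 2 * (b - a) / pi + e" .
qed

lemma annulus_log_deriv_bound:
  fixes G :: "complex \<Rightarrow> complex"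
  assumes hol: "G holomorphic_on ball 0 1" and l: "0 < l"
    and bounds: "\<And>w. w \<in> ball 0 1 \<Longrightarrow> l \<le> cmod (G w) \<and> cmod (G w) \<le> L"
    and z: "z \<in> ball 0 1"
  shows "(1 - (cmod z)\<^sup>2) * cmod (deriv G z / G z) \<le> 2 / pi * ln (L / l)"
proof -
  have G_nz: "G w \<noteq> 0" if "w \<in> ball 0 1" for w
    using bounds[OF that] l by auto
  obtain g where hol_g: "g holomorphic_on ball 0 1"
    and exp_g: "\<And>w. w \<in> ball 0 1 \<Longrightarrow> exp (g w) = G w"
    using holomorphic_logarithm_exists[OF convex_ball open_ball hol G_nz, of 0] by auto
  have Re_g: "ln l \<le> Re (g w) \<and> Re (g w) \<le> ln L" if "w \<in> ball 0 1" for w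
  proof -
    have "Re (g w) = ln (cmod (G w))" using exp_g[OF that] by (metis norm_exp_eq_Re ln_exp)
    moreover have "0 < cmod (G w)" using G_nz[OF that] by simp
    ultimately show ?thesis using bounds[OF that] l by simp
  qed
  have "((\<lambda>w. exp (g w)) has_field_derivative G z * deriv g z) (at z)"
    using DERIV_chain2[OF DERIV_exp holomorphic_derivI[OF hol_g open_ball z]] exp_g[OF z] by simp
  hence "(G has_field_derivative G z * deriv g z) (at z)"
    by (rule has_field_derivative_transform_within_open[OF _ open_ball z]) (simp add: exp_g)
  hence "deriv g z = deriv G z / G z"
    using G_nz[OF z] by (simp add: DERIV_imp_deriv)
  moreover have "ln (L / l) = ln L - ln l"
    using bounds[OF z] l by (simp add: ln_div)
  ultimately show ?thesis
    using closed_strip_deriv_bound[OF hol_g Re_g z] by simp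
qed

lemma holomorphic_sub_center_bound:
  fixes G :: "complex \<Rightarrow> complex"
  assumes hol: "G holomorphic_on ball 0 1"
    and bound: "\<And>w. w \<in> ball 0 1 \<Longrightarrow> (1 - (cmod w)\<^sup>2) * cmod (deriv G w) \<le> K"
    and z: "z \<in> ball 0 1"
  shows "(1 - (cmod z)\<^sup>2) * cmod (G z - G 0) \<le> K * cmod z"
proof -
  define r where "r = cmod z"
  have r: "0 \<le> r" "r < 1" using z by (auto simp: r_def)
  have r2: "0 < 1 - r\<^sup>2" using r by (simp add: abs_square_less_1)
  have deriv_bound: "cmod (deriv G w) \<le> K / (1 - r\<^sup>2)" if "w \<in> cball 0 r" for w
  proof -
    have w: "w \<in> ball 0 1" using that r by auto
    have "(cmod w)\<^sup>2 \<le> r\<^sup>2" using that by (intro power_mono) auto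
    hence "(1 - r\<^sup>2) * cmod (deriv G w) \<le> (1 - (cmod w)\<^sup>2) * cmod (deriv G w)"
      by (simp add: mult_right_mono)
    hence "(1 - r\<^sup>2) * cmod (deriv G w) \<le> K" using bound[OF w] by linarith
    thus ?thesis using r2 by (simp add: pos_le_divide_eq mult.commute)
  qed
  have "cmod (G z - G 0) \<le> K / (1 - r\<^sup>2) * cmod (z - 0)"
  proof (rule field_differentiable_bound[OF convex_cball _ deriv_bound])
    fix w :: complex assume "w \<in> cball 0 r"
    hence "w \<in> ball 0 1" using r by auto
    thus "(G has_field_derivative deriv G w) (at w within cball 0 r)"
      by (rule has_field_derivative_at_within[OF holomorphic_derivI[OF hol open_ball]])
  qed (use r in \<open>simp_all add: r_def\<close>)
  thus ?thesis using r2 by (simp add: r_def pos_le_divide_eq mult.commute)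
qed

lemma deriv_deriv_div_deriv_eq:
  fixes f G :: "complex \<Rightarrow> complex"
  assumes S: "open S" and hol_f: "f holomorphic_on S" and hol_G: "G holomorphic_on S"
    and z: "z \<in> S" "z \<noteq> 0" and nz: "f z \<noteq> 0" "G z \<noteq> 0"
    and df: "\<And>w. w \<in> S \<Longrightarrow> w \<noteq> 0 \<Longrightarrow> deriv f w = G w * f w / w"
  shows "deriv (deriv f) z / deriv f z = deriv G z / G z + (G z - 1) / z"
proof -
  have "((\<lambda>w. G w * f w / w) has_field_derivative
      ((deriv G z * f z + G z * deriv f z) * z - G z * f z) / (z * z)) (at z)"
    using DERIV_divide[OF DERIV_mult[OF holomorphic_derivI[OF hol_G S z(1)]
        holomorphic_derivI[OF hol_f S z(1)]] DERIV_ident z(2)]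
    by (simp add: mult.commute)
  hence "(deriv f has_field_derivative
      ((deriv G z * f z + G z * deriv f z) * z - G z * f z) / (z * z)) (at z)"
    by (rule has_field_derivative_transform_within_open[of _ _ _ "S - {0}"])
       (use S z df in \<open>auto simp: open_delete\<close>)
  hence "deriv (deriv f) z = ((deriv G z * f z + G z * deriv f z) * z - G z * f z) / (z * z)"
    by (rule DERIV_imp_deriv)
  thus ?thesis using z nz
    by (simp add: df[OF z] field_simps) (metis distrib_left mult_left_cancel)
qed

definition starlike_quotient :: "(complex \<Rightarrow> complex) \<Rightarrow> complex \<Rightarrow> complex" where
  "starlike_quotient f z = (if z = 0 then 1 else z * deriv f z / f z)"

lemma deriv_eq_starlike_quotient:
  "z \<noteq> 0 \<Longrightarrow> f z \<noteq> 0 \<Longrightarrow> deriv f z = starlike_quotient f z * f z / z"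
  by (simp add: starlike_quotient_def)

lemma absQ_eq_starlike_quotient:
  "z = 0 \<or> f z \<noteq> 0 \<Longrightarrow> absQ f z = ereal (cmod (starlike_quotient f z))"
  by (auto simp: absQ_def starlike_quotient_def)

lemma holomorphic_starlike_quotient:
  assumes "classA f" and nz: "\<And>w. w \<in> ball 0 1 \<Longrightarrow> w \<noteq> 0 \<Longrightarrow> f w \<noteq> 0"
  shows "starlike_quotient f holomorphic_on ball 0 1"
proof -
  have hol: "f holomorphic_on ball 0 1" and f0: "f 0 = 0" and d0: "deriv f 0 = 1"
    using assms(1) by (auto simp: classA_def)
  define Q where "Q = (\<lambda>w. if w = 0 then deriv f 0 else (f w - f 0) / (w - 0))"
  have "Q holomorphic_on ball 0 1" unfolding Q_def by (rule pole_lemma[OF hol]) simp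
  moreover have "Q w \<noteq> 0" if "w \<in> ball 0 1" for w
    using that nz d0 f0 by (auto simp: Q_def)
  ultimately have "(\<lambda>w. deriv f w / Q w) holomorphic_on ball 0 1"
    by (intro holomorphic_intros holomorphic_deriv hol) auto
  moreover have "(\<lambda>w. deriv f w / Q w) = starlike_quotient f"
    using d0 f0 by (auto simp: fun_eq_iff Q_def starlike_quotient_def)
  ultimately show ?thesis by simp
qed

lemma Lsup_finite_imp_nonzero:
  assumes "Lsup f < \<infinity>" "w \<in> ball 0 1" "w \<noteq> 0"
  shows "f w \<noteq> 0"
proof
  assume "f w = 0"
  hence "absQ f w = \<infinity>" using assms(3) by (simp add: absQ_def)
  hence "\<infinity> \<le> Lsup f" unfolding Lsup_def using assms(2) by (metis SUP_upper)
  thus False using assms(1) by simp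
qed

lemma Lsup_linf_real_bounds:
  assumes "Lsup f < \<infinity>" "linf f > 0"
  obtains L l where "Lsup f = ereal L" "linf f = ereal l" "0 < l"
    "\<And>w. w \<in> ball 0 1 \<Longrightarrow> l \<le> cmod (starlike_quotient f w) \<and> cmod (starlike_quotient f w) \<le> L"
proof -
  have between: "linf f \<le> ereal (cmod (starlike_quotient f w))"
      "ereal (cmod (starlike_quotient f w)) \<le> Lsup f" if "w \<in> ball 0 1" for w
  proof -
    have "absQ f w = ereal (cmod (starlike_quotient f w))"
      using Lsup_finite_imp_nonzero[OF assms(1) that] by (auto intro: absQ_eq_starlike_quotient)
    thus "linf f \<le> ereal (cmod (starlike_quotient f w))"
      "ereal (cmod (starlike_quotient f w)) \<le> Lsup f"
      unfolding Lsup_def linf_def using that by (metis INF_lower, metis SUP_upper)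
  qed
  obtain L where L: "Lsup f = ereal L"
    using assms(1) between(2)[of 0] by (cases "Lsup f") auto
  obtain l where l: "linf f = ereal l"
    using assms(2) between(1)[of 0] by (cases "linf f") auto
  show ?thesis
    by (rule that[OF L l]) (use assms(2) between L l in auto)
qed

lemma preSchwarzian_bound_off_center:
  assumes "classA f" and nz: "\<And>w. w \<in> ball 0 1 \<Longrightarrow> w \<noteq> 0 \<Longrightarrow> f w \<noteq> 0" and l: "0 < l"
    and bounds: "\<And>w. w \<in> ball 0 1 \<Longrightarrow>
      l \<le> cmod (starlike_quotient f w) \<and> cmod (starlike_quotient f w) \<le> L"
    and z: "z \<in> ball 0 1" "z \<noteq> 0"
  shows "(1 - (cmod z)\<^sup>2) * cmod (deriv (deriv f) z / deriv f z) \<le> 2 / pi * (1 + L) * ln (L / l)"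
proof -
  define G where "G = starlike_quotient f"
  define C where "C = 2 / pi * ln (L / l)"
  have hol_f: "f holomorphic_on ball 0 1" using assms(1) by (simp add: classA_def)
  have hol_G: "G holomorphic_on ball 0 1"
    unfolding G_def by (rule holomorphic_starlike_quotient[OF assms(1) nz])
  have G_nz: "G w \<noteq> 0" if "w \<in> ball 0 1" for w
    using bounds[OF that] l by (auto simp: G_def)
  have log_deriv: "(1 - (cmod w)\<^sup>2) * cmod (deriv G w / G w) \<le> C" if "w \<in> ball 0 1" for w
    unfolding C_def G_def by (rule annulus_log_deriv_bound[OF hol_G[unfolded G_def] l bounds that])
  have "(1 - (cmod w)\<^sup>2) * cmod (deriv G w) \<le> L * C" if w: "w \<in> ball 0 1" for w
  proof -
    have "(1 - (cmod w)\<^sup>2) * cmod (deriv G w) = cmod (G w) * ((1 - (cmod w)\<^sup>2) * cmod (deriv G w / G w))"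
      using G_nz[OF w] by (simp add: norm_divide)
    also have "\<dots> \<le> L * C"
      using bounds[OF w] log_deriv[OF w] w
      by (intro mult_mono) (auto simp: G_def abs_square_le_1 intro: order_trans[OF norm_ge_zero])
    finally show ?thesis .
  qed
  hence growth: "(1 - (cmod z)\<^sup>2) * cmod (G z - 1) \<le> L * C * cmod z"
    using holomorphic_sub_center_bound[OF hol_G _ z(1)] by (simp add: G_def starlike_quotient_def)
  have "deriv (deriv f) z / deriv f z = deriv G z / G z + (G z - 1) / z"
    using deriv_deriv_div_deriv_eq[OF open_ball hol_f hol_G z nz[OF z] G_nz[OF z(1)]]
      deriv_eq_starlike_quotient nz by (simp add: G_def)
  hence "(1 - (cmod z)\<^sup>2) * cmod (deriv (deriv f) z / deriv f z)
      \<le> (1 - (cmod z)\<^sup>2) * (cmod (deriv G z / G z) + cmod ((G z - 1) / z))"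
    using z(1) by (simp, intro mult_left_mono norm_triangle_ineq) (simp add: abs_square_le_1)
  also have "\<dots> = (1 - (cmod z)\<^sup>2) * cmod (deriv G z / G z)
      + (1 - (cmod z)\<^sup>2) * cmod (G z - 1) / cmod z"
    by (simp add: distrib_left norm_divide)
  also have "\<dots> \<le> C + L * C"
  proof -
    have "(1 - (cmod z)\<^sup>2) * cmod (G z - 1) / cmod z \<le> L * C"
      using growth z(2) by (simp add: divide_le_eq)
    thus ?thesis using log_deriv[OF z(1)] by linarith
  qed
  also have "\<dots> = 2 / pi * (1 + L) * ln (L / l)" by (simp add: C_def field_simps)
  finally show ?thesis .
qed

lemma le_at_center_if_le_punctured:
  fixes E :: "'a::{metric_space,perfect_space} \<Rightarrow> real"
  assumes "isCont E a" "0 < r" "\<And>z. z \<in> ball a r \<Longrightarrow> z \<noteq> a \<Longrightarrow> E z \<le> B"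
  shows "E a \<le> B"
proof (rule tendsto_upperbound)
  show "(E \<longlongrightarrow> E a) (at a)" using assms(1) by (simp add: isCont_def)
  show "eventually (\<lambda>z. E z \<le> B) (at a)"
    unfolding eventually_at using assms(2,3) by (auto simp: dist_commute)
qed simp

lemma preSchwarzian_bound:
  assumes "classA f" and nz: "\<And>w. w \<in> ball 0 1 \<Longrightarrow> w \<noteq> 0 \<Longrightarrow> f w \<noteq> 0" and l: "0 < l"
    and bounds: "\<And>w. w \<in> ball 0 1 \<Longrightarrow>
      l \<le> cmod (starlike_quotient f w) \<and> cmod (starlike_quotient f w) \<le> L"
    and z: "z \<in> ball 0 1"
  shows "deriv f z \<noteq> 0"
    and "(1 - (cmod z)\<^sup>2) * cmod (deriv (deriv f) z / deriv f z) \<le> 2 / pi * (1 + L) * ln (L / l)"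
proof -
  have hol: "f holomorphic_on ball 0 1" and d0: "deriv f 0 = 1"
    using assms(1) by (auto simp: classA_def)
  show "deriv f z \<noteq> 0"
    using d0 deriv_eq_starlike_quotient[of z f] nz[OF z] bounds[OF z] l by (cases "z = 0") auto
  define E where "E = (\<lambda>z. (1 - (cmod z)\<^sup>2) * cmod (deriv (deriv f) z / deriv f z))"
  have "isCont (deriv f) 0" "isCont (deriv (deriv f)) 0"
    using hol by (auto intro!: holomorphic_on_imp_continuous_on holomorphic_deriv
        continuous_on_interior[of "ball 0 1"])
  hence "isCont E 0" unfolding E_def using d0 by (intro continuous_intros) auto
  hence "E 0 \<le> 2 / pi * (1 + L) * ln (L / l)"
    by (rule le_at_center_if_le_punctured[OF _ zero_less_one])
       (use preSchwarzian_bound_off_center[OF assms(1) nz l bounds] in \<open>simp add: E_def\<close>)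
  thus "E z \<le> 2 / pi * (1 + L) * ln (L / l)"
    using preSchwarzian_bound_off_center[OF assms(1) nz l bounds z] by (cases "z = 0") (auto simp: E_def)
qed

theorem proposition2p4:
  fixes f :: "complex \<Rightarrow> complex"
  assumes "classA f"
    and "Lsup f < \<infinity>" and "linf f > 0"
  shows "preSchwarzian_norm f \<le>
    ereal (2 / pi * (1 + real_of_ereal (Lsup f))
           * ln (real_of_ereal (Lsup f) / real_of_ereal (linf f)))"
proof -
  obtain L l where L: "Lsup f = ereal L" and l: "linf f = ereal l" "0 < l"
    and bounds: "\<And>w. w \<in> ball 0 1 \<Longrightarrow>
      l \<le> cmod (starlike_quotient f w) \<and> cmod (starlike_quotient f w) \<le> L"
    using Lsup_linf_real_bounds[OF assms(2,3)] by blast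
  note bound = preSchwarzian_bound[OF assms(1) Lsup_finite_imp_nonzero[OF assms(2)] l(2) bounds]
  have "preSchwarzian_norm f \<le> ereal (2 / pi * (1 + L) * ln (L / l))"
    unfolding preSchwarzian_norm_def using bound by (auto intro!: SUP_least)
  thus ?thesis using L l by simp
qed

end
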